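(* Suppose that there exists an integer ${}^\lambda\mathrm{H}_t(m,n;s,k)$ with $\lambda$ odd. (1) If $t$ divides $\frac{nk}{\lambda}$, then $\frac{nk}{\lambda}\equiv 0\pmod 4$ or $\frac{nk}{\lambda}\equiv -t\equiv \pm1\pmod 4$. (2) If $t=\frac{2nk}{\lambda}$, then $s$ and $k$ are both even. (3) If $t\neq\frac{2nk}{\lambda}$ and $t$ does not divide $\frac{nk}{\lambda}$, then $\frac{2nk}{\lambda}+t\equiv 0\pmod 8$.
   Context: Let $m,n,s,k,\lambda,t$ be positive integers with $t$ dividing $\frac{2nk}{\lambda}$, let $v=\frac{2nk}{\lambda}+t$ and let $J$ be the subgroup of $\mathbb{Z}_v$ of order $t$. A $\lambda$-fold Heffter array ${}^\lambda\mathrm{H}_t(m,n;s,k)$ is an $m\times n$ partially filled array with entries in $\mathbb{Z}_v$ such that: (a) each row has exactly $s$ and each column exactly $k$ filled cells; (b) the multiset $\{\pm x: x$ an entry of a filled cell$\}$ contains each element of $\mathbb{Z}_v\setminus J$ exactly $\lambda$ times and no element of $J$; (c) every row and every column sums to $0$ in $\mathbb{Z}_v$. It is called integer if, when each entry is represented by its unique integer representative in $\pm\{1,2,\dots,\lfloor v/2\rfloor\}$, every row and every column sums to $0$ in $\mathbb{Z}$. *)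

theory Defs
  imports Main "HOL-Library.Multiset"
begin

text \<open>An m x n partially filled array is modelled as a function
  A :: nat => nat => int option, with A i j = None meaning "empty cell".
  Elements of Z_v are represented by their canonical representatives in {0..<v}.\<close>

definition heff_v :: "nat \<Rightarrow> nat \<Rightarrow> nat \<Rightarrow> nat \<Rightarrow> int" where
  "heff_v lam t n k = int (2 * n * k div lam + t)"

definition filled_cells :: "nat \<Rightarrow> nat \<Rightarrow> (nat \<Rightarrow> nat \<Rightarrow> int option) \<Rightarrow> (nat \<times> nat) set" where
  "filled_cells m n A = {(i, j). i < m \<and> j < n \<and> A i j \<noteq> None}"

definition entry :: "(nat \<Rightarrow> nat \<Rightarrow> int option) \<Rightarrow> nat \<Rightarrow> nat \<Rightarrow> int" where
  "entry A i j = (case A i j of None \<Rightarrow> 0 | Some a \<Rightarrow> a)"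

definition pm_entries :: "int \<Rightarrow> nat \<Rightarrow> nat \<Rightarrow> (nat \<Rightarrow> nat \<Rightarrow> int option) \<Rightarrow> int multiset" where
  "pm_entries v m n A =
     image_mset (\<lambda>(i, j). entry A i j mod v) (mset_set (filled_cells m n A)) +
     image_mset (\<lambda>(i, j). (- entry A i j) mod v) (mset_set (filled_cells m n A))"

text \<open>The subgroup J of Z_v of order t (t dividing v): the multiples of v/t.\<close>
definition subgrp_J :: "int \<Rightarrow> nat \<Rightarrow> int set" where
  "subgrp_J v t = {x. 0 \<le> x \<and> x < v \<and> (v div int t) dvd x}"

definition heffter ::
  "nat \<Rightarrow> nat \<Rightarrow> nat \<Rightarrow> nat \<Rightarrow> nat \<Rightarrow> nat \<Rightarrow> (nat \<Rightarrow> nat \<Rightarrow> int option) \<Rightarrow> bool" where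
  "heffter lam t m n s k A \<longleftrightarrow>
     (let v = heff_v lam t n k in
      lam dvd 2 * n * k \<and> t dvd (2 * n * k div lam) \<and>
      (\<forall>i j. (m \<le> i \<or> n \<le> j) \<longrightarrow> A i j = None) \<and>
      (\<forall>i j a. A i j = Some a \<longrightarrow> 0 \<le> a \<and> a < v) \<and>
      (\<forall>i<m. card {j. j < n \<and> A i j \<noteq> None} = s) \<and>
      (\<forall>j<n. card {i. i < m \<and> A i j \<noteq> None} = k) \<and>
      (\<forall>x. 0 \<le> x \<and> x < v \<longrightarrow>
          count (pm_entries v m n A) x = (if x \<in> subgrp_J v t then 0 else lam)) \<and>
      (\<forall>i<m. (\<Sum>j<n. entry A i j) mod v = 0) \<and>
      (\<forall>j<n. (\<Sum>i<m. entry A i j) mod v = 0))"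

definition int_rep :: "int \<Rightarrow> int \<Rightarrow> int" where
  "int_rep v x = (if x mod v \<le> v div 2 then x mod v else x mod v - v)"

definition integer_heffter ::
  "nat \<Rightarrow> nat \<Rightarrow> nat \<Rightarrow> nat \<Rightarrow> nat \<Rightarrow> nat \<Rightarrow> (nat \<Rightarrow> nat \<Rightarrow> int option) \<Rightarrow> bool" where
  "integer_heffter lam t m n s k A \<longleftrightarrow>
     heffter lam t m n s k A \<and>
     (let v = heff_v lam t n k in
      (\<forall>i<m. (\<Sum>j<n. int_rep v (entry A i j)) = 0) \<and>
      (\<forall>j<n. (\<Sum>i<m. int_rep v (entry A i j)) = 0))"

end

theory Submission
  imports Defs
begin

(* Summing all rows, the integer representatives of the entries add up to 0, so an even
   number of them is odd.  The representative of an entry x is odd exactly when the one of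
   x, -x lying in [1, v/2] is odd, and by the Heffter condition every residue outside J
   arises exactly lam times as such a +-x.  Hence lam times the number of odd a in [1, v/2]
   outside J is even, so that number is even as lam is odd.  Writing 2nk/lam = t p, J is the
   set of multiples of p + 1, and counting the odd a in [1, v/2] not divisible by p + 1 turns
   this parity statement into the congruences (1) and (3).  In case (2), J is the set of even
   residues, so all entries are odd and every row and column has an even number of them. *)

lemma card_odd_int_atLeastAtMost:
  fixes N :: int
  assumes "0 \<le> N"
  shows "int (card {a. 1 \<le> a \<and> a \<le> N \<and> odd a}) = (N + 1) div 2"
proof -
  have "{a. 1 \<le> a \<and> a \<le> N \<and> odd a} = (\<lambda>j. 2 * j + 1) ` {0..<(N + 1) div 2}"
  proof (rule set_eqI, rule iffI)
    fix a assume "a \<in> {a. 1 \<le> a \<and> a \<le> N \<and> odd a}"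
    then have "a = 2 * ((a - 1) div 2) + 1" "(a - 1) div 2 \<in> {0..<(N + 1) div 2}"
      by (auto elim!: oddE)
    then show "a \<in> (\<lambda>j. 2 * j + 1) ` {0..<(N + 1) div 2}" by blast
  qed auto
  then show ?thesis using assms by (simp add: card_image inj_on_def)
qed

lemma card_odd_multiples_int:
  fixes q N :: int
  assumes "0 < q" "odd q"
  shows "card {a. 1 \<le> a \<and> a \<le> N \<and> odd a \<and> q dvd a} = card {j. 1 \<le> j \<and> j \<le> N div q \<and> odd j}"
proof -
  have upper: "q * j \<le> N \<longleftrightarrow> j \<le> N div q" for j
  proof
    assume "q * j \<le> N"
    then show "j \<le> N div q" using zdiv_mono1[of "q * j" N q] assms(1) by simp
  next
    assume "j \<le> N div q"
    then have "q * j \<le> q * (N div q)" using assms(1) by simp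
    also have "\<dots> = N - N mod q" by (simp add: minus_mod_eq_mult_div)
    also have "\<dots> \<le> N" using assms(1) by simp
    finally show "q * j \<le> N" .
  qed
  have lower: "1 \<le> q * j \<longleftrightarrow> 1 \<le> j" for j
    using assms(1) by (simp add: int_one_le_iff_zero_less zero_less_mult_iff)
  have "{a. 1 \<le> a \<and> a \<le> N \<and> odd a \<and> q dvd a} = (\<lambda>j. q * j) ` {j. 1 \<le> j \<and> j \<le> N div q \<and> odd j}"
  proof (intro set_eqI iffI)
    fix a assume a: "a \<in> {a. 1 \<le> a \<and> a \<le> N \<and> odd a \<and> q dvd a}"
    then obtain j where "a = q * j" by blast
    with a show "a \<in> (\<lambda>j. q * j) ` {j. 1 \<le> j \<and> j \<le> N div q \<and> odd j}" by (auto simp: upper lower)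
  qed (use assms(2) in \<open>auto simp: upper lower\<close>)
  then show ?thesis using assms(1) by (simp add: card_image inj_on_def)
qed

lemma card_odd_nonmultiples_int:
  fixes q N :: int
  assumes "0 \<le> N" "0 < q"
  shows "int (card {a. 1 \<le> a \<and> a \<le> N \<and> odd a \<and> \<not> q dvd a})
    = (N + 1) div 2 - (if even q then 0 else (N div q + 1) div 2)"
proof -
  let ?Odd = "{a. 1 \<le> a \<and> a \<le> N \<and> odd a}"
  let ?Mult = "{a. 1 \<le> a \<and> a \<le> N \<and> odd a \<and> q dvd a}"
  have fin: "finite ?Odd" by (rule finite_subset[of _ "{1..N}"]) auto
  have sub: "?Mult \<subseteq> ?Odd" by auto
  have "{a. 1 \<le> a \<and> a \<le> N \<and> odd a \<and> \<not> q dvd a} = ?Odd - ?Mult" by auto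
  then have "card {a. 1 \<le> a \<and> a \<le> N \<and> odd a \<and> \<not> q dvd a} = card ?Odd - card ?Mult"
    using card_Diff_subset[OF finite_subset[OF sub fin] sub] by simp
  moreover have "card ?Mult \<le> card ?Odd" using fin by (intro card_mono) auto
  moreover have "int (card ?Mult) = (if even q then 0 else (N div q + 1) div 2)"
  proof (cases "even q")
    case True
    then have "?Mult = {}" by (auto dest: dvd_trans)
    then show ?thesis using True by (metis card.empty of_nat_0)
  next
    case False
    have "0 \<le> N div q" using assms by (simp add: pos_imp_zdiv_nonneg_iff)
    then show ?thesis
      using False card_odd_multiples_int[OF assms(2) False] card_odd_int_atLeastAtMost by simp
  qed
  ultimately show ?thesis using card_odd_int_atLeastAtMost[OF assms(1)] by simp
qed

lemma abs_int_rep: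
  assumes "0 \<le> x" "x < v"
  shows "\<bar>int_rep v x\<bar> = (if x \<le> v div 2 then x else v - x)"
  using assms by (simp add: int_rep_def)

lemma card_abs_int_rep_mem:
  fixes e :: "'c \<Rightarrow> int" and J S :: "int set"
  assumes fin: "finite F"
    and range: "\<And>c. c \<in> F \<Longrightarrow> 0 \<le> e c \<and> e c < v"
    and not_half: "\<And>c. c \<in> F \<Longrightarrow> 2 * e c \<noteq> v"
      \<comment> \<open>v/2 equals its own negative and would be counted twice\<close>
    and count: "\<And>x. 0 \<le> x \<Longrightarrow> x < v \<Longrightarrow>
      count (image_mset (\<lambda>c. e c mod v) (mset_set F) + image_mset (\<lambda>c. (- e c) mod v) (mset_set F)) x
        = (if x \<in> J then 0 else lam)"
    and "0 \<notin> S"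
  shows "card {c\<in>F. \<bar>int_rep v (e c)\<bar> \<in> S} = lam * card {a. 1 \<le> a \<and> a \<le> v div 2 \<and> a \<in> S \<and> a \<notin> J}"
proof -
  define PM where "PM = image_mset (\<lambda>c. e c mod v) (mset_set F) + image_mset (\<lambda>c. (- e c) mod v) (mset_set F)"
  define B where "B = {a. 1 \<le> a \<and> a \<le> v div 2 \<and> a \<in> S \<and> a \<notin> J}"
  have finB: "finite B" unfolding B_def by (rule finite_subset[of _ "{1..v div 2}"]) auto
  have "filter_mset (\<lambda>a. a \<in> B) PM = repeat_mset lam (mset_set B)"
  proof (rule multiset_eqI)
    fix x
    show "count (filter_mset (\<lambda>a. a \<in> B) PM) x = count (repeat_mset lam (mset_set B)) x"
      using count[of x] finB unfolding PM_def B_def by auto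
  qed
  then have "size (filter_mset (\<lambda>a. a \<in> B) PM) = lam * card B" by simp
  moreover have "size (filter_mset (\<lambda>a. a \<in> B) PM) = card {c\<in>F. e c mod v \<in> B} + card {c\<in>F. (- e c) mod v \<in> B}"
    unfolding PM_def using fin by (simp add: filter_mset_image_mset)
  moreover have "(e c mod v \<in> B \<or> (- e c) mod v \<in> B \<longleftrightarrow> \<bar>int_rep v (e c)\<bar> \<in> S)
      \<and> \<not> (e c mod v \<in> B \<and> (- e c) mod v \<in> B)" if "c \<in> F" for c
  proof -
    have x: "0 \<le> e c" "e c < v" "2 * e c \<noteq> v" using range not_half that by auto
    have "y \<notin> J" if "y \<in># PM" for y
    proof -
      have "0 \<le> y" "y < v" using that x by (auto simp: PM_def)
      then have "count PM y = (if y \<in> J then 0 else lam)" using count[of y] by (simp add: PM_def)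
      moreover have "count PM y \<noteq> 0" using \<open>y \<in># PM\<close> by simp
      ultimately show ?thesis by (simp split: if_splits)
    qed
    moreover have "e c mod v \<in># PM" "(- e c) mod v \<in># PM" using that fin by (auto simp: PM_def)
    moreover have "e c mod v = e c" "(- e c) mod v = (if e c = 0 then 0 else v - e c)"
      using x by (auto simp: zmod_zminus1_eq_if)
    ultimately show ?thesis using x \<open>0 \<notin> S\<close> by (auto simp: B_def abs_int_rep)
  qed
  then have "{c\<in>F. \<bar>int_rep v (e c)\<bar> \<in> S} = {c\<in>F. e c mod v \<in> B} \<union> {c\<in>F. (- e c) mod v \<in> B}"
    and "{c\<in>F. e c mod v \<in> B} \<inter> {c\<in>F. (- e c) mod v \<in> B} = {}"
    by blast+
  ultimately show ?thesis using fin by (simp add: card_Un_disjoint B_def)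
qed

lemma subgrp_J_eq:
  assumes "v = int t * q" "0 < t"
  shows "subgrp_J v t = {x. 0 \<le> x \<and> x < v \<and> q dvd x}"
  using assms by (simp add: subgrp_J_def)

lemma half_mem_subgrp_J:
  assumes "2 * d = t * p" "0 < t" "2 * x = int (2 * d + t)"
  shows "x \<in> subgrp_J (int (2 * d + t)) t"
proof -
  have v: "int (2 * d + t) = int t * (int p + 1)" using assms(1) by (simp add: algebra_simps)
  show ?thesis
  proof (cases "even t")
    case True
    then obtain r where "t = 2 * r" by blast
    then have "x = int r * (int p + 1)" using assms(3) v by simp
    then show ?thesis using assms(2,3) v by (simp add: subgrp_J_eq)
  next
    case False
    then have "even p" using assms(1) by (metis dvd_triv_left even_mult_iff)
    then have "odd (int (2 * d + t))" using False v by simp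
    then show ?thesis using assms(3) by (metis dvd_triv_left)
  qed
qed

definition odd_reps_outside_J :: "int \<Rightarrow> nat \<Rightarrow> int set" where
  "odd_reps_outside_J v t = {a. 1 \<le> a \<and> a \<le> v div 2 \<and> odd a \<and> a \<notin> subgrp_J v t}"

lemma card_odd_reps_outside_J:
  assumes "2 * d = t * p" "0 < t"
  shows "int (card (odd_reps_outside_J (int (2 * d + t)) t))
    = (int d + int t div 2 + 1) div 2 - (if odd p then 0 else (int t div 2 + 1) div 2)"
proof -
  let ?q = "int p + 1"
  have v: "int (2 * d + t) = int t * ?q" using assms(1) by (simp add: algebra_simps)
  have half: "int (2 * d + t) div 2 = int d + int t div 2" by simp
  have "odd_reps_outside_J (int (2 * d + t)) t = {a. 1 \<le> a \<and> a \<le> int d + int t div 2 \<and> odd a \<and> \<not> ?q dvd a}"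
    unfolding odd_reps_outside_J_def half subgrp_J_eq[OF v assms(2)] by auto
  moreover have "(int d + int t div 2) div ?q = int t div 2"
  proof -
    have "int t * ?q div 2 div ?q = int t * ?q div (2 * ?q)" by (rule zdiv_zmult2_eq[symmetric]) simp
    also have "\<dots> = int t div 2" by (rule div_mult_mult2) simp
    finally show ?thesis unfolding half[symmetric] v .
  qed
  ultimately show ?thesis by (simp add: card_odd_nonmultiples_int)
qed

lemma filled_cells_subset: "filled_cells m n A \<subseteq> {..<m} \<times> {..<n}"
  by (auto simp: filled_cells_def)

lemma finite_filled_cells: "finite (filled_cells m n A)"
  using filled_cells_subset by (rule finite_subset) simp

lemma pm_entries_eq:
  "pm_entries v m n A = image_mset (\<lambda>c. case_prod (entry A) c mod v) (mset_set (filled_cells m n A))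
     + image_mset (\<lambda>c. (- case_prod (entry A) c) mod v) (mset_set (filled_cells m n A))"
  by (simp add: pm_entries_def split_def)

lemma heffter_double_div:
  assumes "heffter lam t m n s k A" "odd lam"
  shows "2 * n * k div lam = 2 * (n * k div lam)"
proof -
  have "lam dvd 2 * (n * k)" using assms(1) by (simp add: heffter_def Let_def mult.assoc)
  then have "lam dvd n * k" using assms(2) by (simp add: coprime_dvd_mult_right_iff)
  then show ?thesis by (simp add: mult.assoc div_mult_swap)
qed

lemma heffter_t_dvd: "heffter lam t m n s k A \<Longrightarrow> t dvd 2 * n * k div lam"
  by (simp add: heffter_def Let_def)

lemma heffter_row_card:
  "heffter lam t m n s k A \<Longrightarrow> i < m \<Longrightarrow> card {j. j < n \<and> A i j \<noteq> None} = s"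
  by (simp add: heffter_def Let_def)

lemma heffter_col_card:
  "heffter lam t m n s k A \<Longrightarrow> j < n \<Longrightarrow> card {i. i < m \<and> A i j \<noteq> None} = k"
  by (simp add: heffter_def Let_def)

lemma heffter_count:
  assumes "heffter lam t m n s k A" "0 \<le> x" "x < heff_v lam t n k"
  shows "count (pm_entries (heff_v lam t n k) m n A) x = (if x \<in> subgrp_J (heff_v lam t n k) t then 0 else lam)"
  using assms by (simp add: heffter_def Let_def)

lemma heffter_entry:
  assumes H: "heffter lam t m n s k A" and a: "A i j = Some a"
  shows "0 \<le> a \<and> a < heff_v lam t n k \<and> a \<notin> subgrp_J (heff_v lam t n k) t"
proof -
  let ?v = "heff_v lam t n k"
  have range: "0 \<le> a" "a < ?v" using H a by (simp_all add: heffter_def Let_def)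
  have "\<forall>i j. (m \<le> i \<or> n \<le> j) \<longrightarrow> A i j = None" using H by (simp add: heffter_def Let_def)
  then have "i < m" "j < n" using a by (metis not_le option.distinct(1))+
  then have "(i, j) \<in> filled_cells m n A" using a by (simp add: filled_cells_def)
  then have "entry A i j mod ?v \<in># pm_entries ?v m n A"
    by (simp add: pm_entries_def finite_filled_cells rev_image_eqI)
  then have "count (pm_entries ?v m n A) a \<noteq> 0" using a range by (simp add: entry_def)
  then show ?thesis using heffter_count[OF H range] range by (simp split: if_splits)
qed

lemma integer_heffter_row_sum:
  "integer_heffter lam t m n s k A \<Longrightarrow> i < m \<Longrightarrow> (\<Sum>j<n. int_rep (heff_v lam t n k) (entry A i j)) = 0"
  by (simp add: integer_heffter_def Let_def)

lemma integer_heffter_col_sum: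
  "integer_heffter lam t m n s k A \<Longrightarrow> j < n \<Longrightarrow> (\<Sum>i<m. int_rep (heff_v lam t n k) (entry A i j)) = 0"
  by (simp add: integer_heffter_def Let_def)

lemma integer_heffter_even_card_odd_cells:
  assumes A: "integer_heffter lam t m n s k A"
  defines "v \<equiv> heff_v lam t n k"
  shows "even (card {c \<in> filled_cells m n A. odd (int_rep v (case_prod (entry A) c))})"
proof -
  let ?e = "case_prod (entry A)"
  have "(\<Sum>c\<in>{..<m} \<times> {..<n}. int_rep v (?e c)) = (\<Sum>i<m. \<Sum>j<n. int_rep v (entry A i j))"
    by (simp add: sum.cartesian_product split_def)
  also have "\<dots> = 0" using integer_heffter_row_sum[OF A] by (simp add: v_def)
  finally have "even (card {c \<in> {..<m} \<times> {..<n}. odd (int_rep v (?e c))})"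
    using even_sum_iff[of "{..<m} \<times> {..<n}" "\<lambda>c. int_rep v (?e c)"] by simp
  moreover have zero: "?e c = 0" if "c \<in> {..<m} \<times> {..<n}" "c \<notin> filled_cells m n A" for c
    using that by (auto simp: filled_cells_def entry_def split: option.splits)
  have "int_rep v 0 = 0" by (simp add: v_def heff_v_def int_rep_def)
  then have "{c \<in> {..<m} \<times> {..<n}. odd (int_rep v (?e c))} = {c \<in> filled_cells m n A. odd (int_rep v (?e c))}"
    using filled_cells_subset[of m n A] zero by fastforce
  ultimately show ?thesis by simp
qed

lemma integer_heffter_even_card_odd_reps_outside_J:
  assumes A: "integer_heffter lam t m n s k A" and "odd lam" "0 < t"
  defines "v \<equiv> heff_v lam t n k"
  shows "even (card (odd_reps_outside_J v t))"
proof -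
  define F where "F = filled_cells m n A"
  define e where "e = case_prod (entry A)"
  have H: "heffter lam t m n s k A" using A by (simp add: integer_heffter_def)
  have cell: "0 \<le> e c \<and> e c < v \<and> e c \<notin> subgrp_J v t" if "c \<in> F" for c
    using that heffter_entry[OF H] by (auto simp: F_def e_def filled_cells_def entry_def v_def)
  obtain p where p: "2 * (n * k div lam) = t * p"
    using heffter_t_dvd[OF H] heffter_double_div[OF H \<open>odd lam\<close>] by (metis dvdE)
  have v: "v = int (2 * (n * k div lam) + t)"
    using heffter_double_div[OF H \<open>odd lam\<close>] by (simp add: v_def heff_v_def)
  have not_half: "2 * e c \<noteq> v" if "c \<in> F" for c
  proof
    assume "2 * e c = v"
    then have "e c \<in> subgrp_J v t" using half_mem_subgrp_J[OF p \<open>0 < t\<close>, of "e c"] v by simp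
    then show False using cell[OF that] by simp
  qed
  have count: "count (image_mset (\<lambda>c. e c mod v) (mset_set F) + image_mset (\<lambda>c. (- e c) mod v) (mset_set F)) x
      = (if x \<in> subgrp_J v t then 0 else lam)" if "0 \<le> x" "x < v" for x
    using heffter_count[OF H, of x] that
    unfolding v_def[symmetric] pm_entries_eq F_def[symmetric] e_def[symmetric] by simp
  have "even (card {c\<in>F. \<bar>int_rep v (e c)\<bar> \<in> {a. odd a}})"
    using integer_heffter_even_card_odd_cells[OF A] by (simp add: F_def e_def v_def)
  also have "card {c\<in>F. \<bar>int_rep v (e c)\<bar> \<in> {a. odd a}}
      = lam * card {a. 1 \<le> a \<and> a \<le> v div 2 \<and> a \<in> {a. odd a} \<and> a \<notin> subgrp_J v t}"
    by (rule card_abs_int_rep_mem[OF _ _ not_half count]) (simp_all add: F_def finite_filled_cells cell)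
  also have "\<dots> = lam * card (odd_reps_outside_J v t)" by (simp add: odd_reps_outside_J_def)
  finally show ?thesis using \<open>odd lam\<close> by simp
qed

lemma integer_heffter_even_row_col_card:
  assumes A: "integer_heffter lam t m n s k A"
    and t: "t = 2 * n * k div lam" and "0 < m" "0 < n" "0 < t"
  shows "even s \<and> even k"
proof -
  define v where "v = heff_v lam t n k"
  have H: "heffter lam t m n s k A" using A by (simp add: integer_heffter_def)
  have v: "v = int t * 2" using t by (simp add: v_def heff_v_def)
  \<comment> \<open>J consists of the even residues, so all entries are odd\<close>
  have odd_rep: "odd (int_rep v (entry A i j)) \<longleftrightarrow> A i j \<noteq> None" for i j
  proof (cases "A i j")
    case None
    then show ?thesis using v by (simp add: entry_def int_rep_def)
  next
    case (Some a)
    then have a: "0 \<le> a" "a < v" "a \<notin> subgrp_J v t" using heffter_entry[OF H] by (simp_all add: v_def)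
    then have "odd a" using subgrp_J_eq[OF v \<open>0 < t\<close>] by auto
    then show ?thesis using Some v a(1,2) by (simp add: entry_def int_rep_def)
  qed
  have "even (card {j\<in>{..<n}. odd (int_rep v (entry A 0 j))})"
    using integer_heffter_row_sum[OF A \<open>0 < m\<close>] even_sum_iff[of "{..<n}" "\<lambda>j. int_rep v (entry A 0 j)"]
    by (simp add: v_def)
  moreover have "{j\<in>{..<n}. odd (int_rep v (entry A 0 j))} = {j. j < n \<and> A 0 j \<noteq> None}"
    using odd_rep by auto
  moreover have "even (card {i\<in>{..<m}. odd (int_rep v (entry A i 0))})"
    using integer_heffter_col_sum[OF A \<open>0 < n\<close>] even_sum_iff[of "{..<m}" "\<lambda>i. int_rep v (entry A i 0)"]
    by (simp add: v_def)
  moreover have "{i\<in>{..<m}. odd (int_rep v (entry A i 0))} = {i. i < m \<and> A i 0 \<noteq> None}"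
    using odd_rep by auto
  ultimately show ?thesis
    using heffter_row_card[OF H \<open>0 < m\<close>] heffter_col_card[OF H \<open>0 < n\<close>] by simp
qed

lemma mod4_of_even_odd_count:
  fixes d t p :: nat
  assumes "2 * d = t * p" "0 < t" "t dvd d"
    and "even ((int d + int t div 2 + 1) div 2 - (if odd p then 0 else (int t div 2 + 1) div 2))"
  shows "int d mod 4 = 0 \<or> (int d mod 4 = (- int t) mod 4 \<and> (int d mod 4 = 1 \<or> int d mod 4 = 3))"
proof -
  obtain r where r: "d = t * r" using assms(3) ..
  then have "p = 2 * r" using assms(1,2) by simp
  then have "even ((int d + int t div 2 + 1) div 2 - (int t div 2 + 1) div 2)" using assms(4) by simp
  moreover have "even (int t) \<longrightarrow> even (int d)" using r by simp
  ultimately show ?thesis using assms(2) by presburger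
qed

lemma mod8_of_even_odd_count:
  fixes d t p :: nat
  assumes "2 * d = t * p" "\<not> t dvd d"
    and "even ((int d + int t div 2 + 1) div 2 - (if odd p then 0 else (int t div 2 + 1) div 2))"
  shows "(2 * d + t) mod 8 = 0"
proof -
  have "odd p"
  proof
    assume "even p"
    then obtain r where "p = 2 * r" ..
    then have "d = t * r" using assms(1) by simp
    then show False using assms(2) by simp
  qed
  then have "even t" using assms(1) by (metis dvd_triv_left even_mult_iff)
  have "4 dvd t * (p + 1)" using \<open>even t\<close> \<open>odd p\<close> by (auto elim!: evenE oddE)
  then have "4 dvd 2 * d + t" using assms(1) by (simp add: algebra_simps)
  then have "int 4 dvd int (2 * d + t)" by (simp only: int_dvd_int_iff)
  moreover have "even ((int d + int t div 2 + 1) div 2)" using assms(3) \<open>odd p\<close> by simp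
  ultimately have "int (2 * d + t) mod 8 = 0" using \<open>even t\<close> by presburger
  then show ?thesis by presburger
qed

theorem proposition4p3:
  fixes m n s k lam t :: nat
  assumes pos: "0 < m" "0 < n" "0 < s" "0 < k" "0 < lam" "0 < t"
    and odd_lam: "odd lam"
    and ex: "\<exists>A. integer_heffter lam t m n s k A"
  shows "(t dvd (n * k div lam) \<longrightarrow>
            (int (n * k div lam) mod 4 = 0 \<or>
             (int (n * k div lam) mod 4 = (- int t) mod 4 \<and>
              (int (n * k div lam) mod 4 = 1 \<or> int (n * k div lam) mod 4 = 3))))
       \<and> (t = 2 * n * k div lam \<longrightarrow> even s \<and> even k)
       \<and> (t \<noteq> 2 * n * k div lam \<and> \<not> t dvd (n * k div lam) \<longrightarrow>
            (2 * n * k div lam + t) mod 8 = 0)"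
proof -
  obtain A where A: "integer_heffter lam t m n s k A" using ex by blast
  then have H: "heffter lam t m n s k A" by (simp add: integer_heffter_def)
  define d where "d = n * k div lam"
  have dd: "2 * n * k div lam = 2 * d" using heffter_double_div[OF H odd_lam] by (simp add: d_def)
  obtain p where p: "2 * d = t * p" using heffter_t_dvd[OF H] unfolding dd ..
  have "heff_v lam t n k = int (2 * d + t)" by (simp add: heff_v_def dd)
  then have "even (int (card (odd_reps_outside_J (int (2 * d + t)) t)))"
    using integer_heffter_even_card_odd_reps_outside_J[OF A odd_lam \<open>0 < t\<close>] by simp
  then have count: "even ((int d + int t div 2 + 1) div 2 - (if odd p then 0 else (int t div 2 + 1) div 2))"
    by (simp only: card_odd_reps_outside_J[OF p \<open>0 < t\<close>])
  have "t dvd d \<longrightarrow> int d mod 4 = 0 \<or> (int d mod 4 = (- int t) mod 4 \<and> (int d mod 4 = 1 \<or> int d mod 4 = 3))"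
    using mod4_of_even_odd_count[OF p \<open>0 < t\<close> _ count] by blast
  moreover have "t = 2 * d \<longrightarrow> even s \<and> even k"
    using integer_heffter_even_row_col_card[OF A _ pos(1,2,6)] dd by simp
  moreover have "\<not> t dvd d \<longrightarrow> (2 * d + t) mod 8 = 0"
    using mod8_of_even_odd_count[OF p _ count] by blast
  ultimately show ?thesis unfolding dd d_def[symmetric] by blast
qed

end
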